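(* For closed terms, the axiom system $\mathbf{BTC}$ (defined in the context) is complete with respect to the standard model: for all closed $\mathbf{BTC}$ tuplix terms $s$ and $t$, if $[\![s]\!]=[\![t]\!]$ then $\mathbf{BTC}\vdash s=t$.
   Context: Data: a meadow is a commutative ring with unit with a total unary operation $(\cdot)^{-1}$ satisfying $(u^{-1})^{-1}=u$ and $u\cdot(u\cdot u^{-1})=u$; a non-trivial cancellation meadow additionally satisfies $0\neq 1$ and the cancellation law ($u\neq 0$ and $uv=uw$ imply $v=w$). Fix such a structure $\mathcal{D}$. Data terms are built from data variables, constants $0,1$, binary $+,\cdot$ and unary $-$, $(\cdot)^{-1}$; write $p/q$ for $p\cdot q^{-1}$ and $p-q$ for $p+(-q)$. Fix a nonempty set $A$ of attributes. $\mathbf{BTC}$ tuplix terms are built from tuplix variables, constants $\epsilon$ and $\delta$, entries $a(p)$ ($a\in A$, $p$ a data term), zero tests $\gamma(p)$, and the binary operators $\oplus$ (conjunctive composition) and $+$ (alternative composition). $\mathbf{BTC}$ is the two-sorted equational proof system with axioms (T1) $x\oplus y=y\oplus x$; (T2) $(x\oplus y)\oplus z=x\oplus(y\oplus z)$; (T3) $x\oplus\epsilon=x$; (T4) $x\oplus\delta=\delta$; (T5) $a(u)\oplus a(v)=a(u+v)$; (T6) $\gamma(u)=\gamma(u/u)$; (T7) $\gamma(0)=\epsilon$; (T8) $\gamma(1)=\delta$; (T9) $\gamma(u)\oplus\gamma(v)=\gamma(u/u+v/v)$; (T10) $\gamma(u-v)\oplus a(u)=\gamma(u-v)\oplus a(v)$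 (for all $a\in A$); (C1) $x+y=y+x$; (C2) $(x+y)+z=x+(y+z)$; (C3) $x+x=x$; (C4) $x+\delta=x$; (C5) $x\oplus(y+z)=(x\oplus y)+(x\oplus z)$; (C6) $\gamma(u)+\gamma(v)=\gamma(uv)$; together with the rule (DE): for all data terms $p,q$, if $\mathcal{D}\models p=q$ then $\gamma(p)=\gamma(q)$ is derivable. Standard model: let $F$ be the set of partial functions $A\rightharpoonup\mathcal{D}$; the domain is $2^F$. For $a\in A$, $d\in\mathcal{D}$, $f_{a,d}$ is defined only at $a$ with value $d$; $f_\epsilon$ is nowhere defined. For $f,g\in F$, $f\oplus g$ is defined at $a$ iff $f$ or $g$ is, with value $f(a)$ if only $f$ is defined there, $g(a)$ if only $g$ is, and $f(a)+g(a)$ if both are. A term is closed if it contains no tuplix and no data variables; closed data terms $p$ denote elements $[\![p]\!]\in\mathcal{D}$. Closed tuplix terms are interpreted by $[\![\delta]\!]=\emptyset$, $[\![\epsilon]\!]=\{f_\epsilon\}$, $[\![a(p)]\!]=\{f_{a,[\![p]\!]}\}$, $[\![\gamma(p)]\!]=\{f_\epsilon\}$ if $[\![p]\!]=0$ and $=\emptyset$ otherwise, $[\![s\oplus t]\!]=\{f\oplus g\mid f\in[\![s]\!],g\in[\![t]\!]\}$, $[\![s+t]\!]=[\![s]\!]\cup[\![t]\!]$. *)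

theory Defs
  imports Main
begin

definition meadow :: "('d::comm_ring_1 \<Rightarrow> 'd) \<Rightarrow> bool" where
  "meadow minv \<longleftrightarrow> (\<forall>u. minv (minv u) = u) \<and> (\<forall>u. u * (u * minv u) = u)"

definition nontrivial_cancellation_meadow :: "('d::comm_ring_1 \<Rightarrow> 'd) \<Rightarrow> bool" where
  "nontrivial_cancellation_meadow minv \<longleftrightarrow>
     meadow minv \<and> (0::'d) \<noteq> 1 \<and>
     (\<forall>u v w::'d. u \<noteq> 0 \<longrightarrow> u * v = u * w \<longrightarrow> v = w)"

datatype dterm = DVar nat | DZero | DOne | DAdd dterm dterm | DMul dterm dterm
  | DNeg dterm | DInv dterm

definition dsub :: "dterm \<Rightarrow> dterm \<Rightarrow> dterm" where "dsub p q = DAdd p (DNeg q)"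
definition ddiv :: "dterm \<Rightarrow> dterm \<Rightarrow> dterm" where "ddiv p q = DMul p (DInv q)"

datatype 'a tterm = TVar nat | Eps | Delta | Entry 'a dterm | Gam dterm
  | Conj "'a tterm" "'a tterm" | Alt "'a tterm" "'a tterm"

fun deval :: "('d::comm_ring_1 \<Rightarrow> 'd) \<Rightarrow> (nat \<Rightarrow> 'd) \<Rightarrow> dterm \<Rightarrow> 'd" where
  "deval minv \<rho> (DVar n) = \<rho> n"
| "deval minv \<rho> DZero = 0"
| "deval minv \<rho> DOne = 1"
| "deval minv \<rho> (DAdd p q) = deval minv \<rho> p + deval minv \<rho> q"
| "deval minv \<rho> (DMul p q) = deval minv \<rho> p * deval minv \<rho> q"
| "deval minv \<rho> (DNeg p) = - deval minv \<rho> p"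
| "deval minv \<rho> (DInv p) = minv (deval minv \<rho> p)"

inductive btc :: "('d::comm_ring_1 \<Rightarrow> 'd) \<Rightarrow> 'a tterm \<Rightarrow> 'a tterm \<Rightarrow> bool"
  for minv :: "'d \<Rightarrow> 'd" where
  refl: "btc minv x x"
| sym: "btc minv x y \<Longrightarrow> btc minv y x"
| trans: "btc minv x y \<Longrightarrow> btc minv y z \<Longrightarrow> btc minv x z"
| cong_conj: "btc minv x x' \<Longrightarrow> btc minv y y' \<Longrightarrow> btc minv (Conj x y) (Conj x' y')"
| cong_alt: "btc minv x x' \<Longrightarrow> btc minv y y' \<Longrightarrow> btc minv (Alt x y) (Alt x' y')"
| T1: "btc minv (Conj x y) (Conj y x)"
| T2: "btc minv (Conj (Conj x y) z) (Conj x (Conj y z))"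
| T3: "btc minv (Conj x Eps) x"
| T4: "btc minv (Conj x Delta) Delta"
| T5: "btc minv (Conj (Entry a u) (Entry a v)) (Entry a (DAdd u v))"
| T6: "btc minv (Gam u) (Gam (ddiv u u))"
| T7: "btc minv (Gam DZero) Eps"
| T8: "btc minv (Gam DOne) Delta"
| T9: "btc minv (Conj (Gam u) (Gam v)) (Gam (DAdd (ddiv u u) (ddiv v v)))"
| T10: "btc minv (Conj (Gam (dsub u v)) (Entry a u)) (Conj (Gam (dsub u v)) (Entry a v))"
| C1: "btc minv (Alt x y) (Alt y x)"
| C2: "btc minv (Alt (Alt x y) z) (Alt x (Alt y z))"
| C3: "btc minv (Alt x x) x"
| C4: "btc minv (Alt x Delta) x"
| C5: "btc minv (Conj x (Alt y z)) (Alt (Conj x y) (Conj x z))"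
| C6: "btc minv (Alt (Gam u) (Gam v)) (Gam (DMul u v))"
| DE: "(\<forall>\<rho>. deval minv \<rho> p = deval minv \<rho> q) \<Longrightarrow> btc minv (Gam p) (Gam q)"

fun dclosed :: "dterm \<Rightarrow> bool" where
  "dclosed (DVar n) = False"
| "dclosed DZero = True"
| "dclosed DOne = True"
| "dclosed (DAdd p q) = (dclosed p \<and> dclosed q)"
| "dclosed (DMul p q) = (dclosed p \<and> dclosed q)"
| "dclosed (DNeg p) = dclosed p"
| "dclosed (DInv p) = dclosed p"

fun tclosed :: "'a tterm \<Rightarrow> bool" where
  "tclosed (TVar n) = False"
| "tclosed Eps = True"
| "tclosed Delta = True"
| "tclosed (Entry a p) = dclosed p"
| "tclosed (Gam p) = dclosed p"
| "tclosed (Conj s t) = (tclosed s \<and> tclosed t)"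
| "tclosed (Alt s t) = (tclosed s \<and> tclosed t)"

text \<open>Tuplices are partial functions A \<rightharpoonup> D, i.e. maps 'a \<Rightarrow> 'd option.\<close>

definition tup_oplus :: "('a \<Rightarrow> 'd::comm_ring_1 option) \<Rightarrow> ('a \<Rightarrow> 'd option) \<Rightarrow> 'a \<Rightarrow> 'd option" where
  "tup_oplus f g = (\<lambda>a. case (f a, g a) of
       (None, None) \<Rightarrow> None
     | (Some x, None) \<Rightarrow> Some x
     | (None, Some y) \<Rightarrow> Some y
     | (Some x, Some y) \<Rightarrow> Some (x + y))"

definition f_entry :: "'a \<Rightarrow> 'd \<Rightarrow> 'a \<Rightarrow> 'd option" where
  "f_entry a d = (\<lambda>b. if b = a then Some d else None)"

definition f_eps :: "'a \<Rightarrow> 'd option" where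
  "f_eps = (\<lambda>_. None)"

text \<open>Closed data terms: value under any valuation (the value does not depend on it);
  we use the constant 0 valuation.  Interpretation is only meaningful for closed terms;
  variables are given dummy values.\<close>

definition dsem :: "('d::comm_ring_1 \<Rightarrow> 'd) \<Rightarrow> dterm \<Rightarrow> 'd" where
  "dsem minv p = deval minv (\<lambda>_. 0) p"

fun tsem :: "('d::comm_ring_1 \<Rightarrow> 'd) \<Rightarrow> 'a tterm \<Rightarrow> ('a \<Rightarrow> 'd option) set" where
  "tsem minv (TVar n) = {}"
| "tsem minv Delta = {}"
| "tsem minv Eps = {f_eps}"
| "tsem minv (Entry a p) = {f_entry a (dsem minv p)}"
| "tsem minv (Gam p) = (if dsem minv p = 0 then {f_eps} else {})"
| "tsem minv (Conj s t) = {tup_oplus f g | f g. f \<in> tsem minv s \<and> g \<in> tsem minv t}"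
| "tsem minv (Alt s t) = tsem minv s \<union> tsem minv t"

end

theory Submission
  imports Defs
begin

text \<open>Every closed term is provably equal to a finite sum (alternative composition) of
  monomials, i.e. conjunctions of entries with closed data, and denotes the set of the
  tuplices of these monomials.  Two monomials with the same tuplix are provably equal:
  T5 merges the entries of one attribute into a single entry, and two entries whose data
  have the same value are identified by T10, since the zero test of their difference
  equals \<open>\<epsilon>\<close> by DE and T7.  Hence two closed terms with the same semantics have
  normal forms whose summands are provably equal up to order and repetition, and each
  sum absorbs the other by C3.\<close>

lemma btc_trans [trans]: "btc minv x y \<Longrightarrow> btc minv y z \<Longrightarrow> btc minv x z"
  by (rule btc.trans)

lemma btc_conj_left_commute: "btc minv (Conj x (Conj y z)) (Conj y (Conj x z))"
proof -
  have "btc minv (Conj x (Conj y z)) (Conj (Conj x y) z)" by (rule btc.sym, rule btc.T2)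
  also have "btc minv \<dots> (Conj (Conj y x) z)" by (rule btc.cong_conj, rule btc.T1, rule btc.refl)
  also have "btc minv \<dots> (Conj y (Conj x z))" by (rule btc.T2)
  finally show ?thesis .
qed

subsection \<open>Monomials and sums of monomials\<close>

fun monomial :: "('a \<times> dterm) list \<Rightarrow> 'a tterm" where
  "monomial [] = Eps"
| "monomial (x # xs) = Conj (Entry (fst x) (snd x)) (monomial xs)"

fun monomial_sum :: "('a \<times> dterm) list list \<Rightarrow> 'a tterm" where
  "monomial_sum [] = Delta"
| "monomial_sum (m # ms) = Alt (monomial m) (monomial_sum ms)"

definition monomial_closed :: "('a \<times> dterm) list \<Rightarrow> bool" where
  "monomial_closed m \<longleftrightarrow> (\<forall>x\<in>set m. dclosed (snd x))"

definition monomial_products :: "('a \<times> dterm) list list \<Rightarrow> ('a \<times> dterm) list list \<Rightarrow> ('a \<times> dterm) list list" where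
  "monomial_products ms1 ms2 = concat (map (\<lambda>m1. map (\<lambda>m2. m1 @ m2) ms2) ms1)"

lemma monomial_append: "btc minv (monomial (m1 @ m2)) (Conj (monomial m1) (monomial m2))"
proof (induction m1)
  case Nil
  have "btc minv (monomial m2) (Conj (monomial m2) Eps)" by (rule btc.sym, rule btc.T3)
  also have "btc minv \<dots> (Conj Eps (monomial m2))" by (rule btc.T1)
  finally show ?case by simp
next
  case (Cons x m)
  have "btc minv (monomial ((x # m) @ m2)) (Conj (Entry (fst x) (snd x)) (Conj (monomial m) (monomial m2)))"
    using Cons by (simp add: btc.cong_conj btc.refl)
  also have "btc minv \<dots> (Conj (monomial (x # m)) (monomial m2))" by (simp, rule btc.sym, rule btc.T2)
  finally show ?case .
qed

lemma monomial_move_to_front: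
  "btc minv (monomial (m0 @ x # m1)) (Conj (Entry (fst x) (snd x)) (monomial (m0 @ m1)))"
proof (induction m0)
  case Nil
  then show ?case by (simp add: btc.refl)
next
  case (Cons y m)
  have "btc minv (monomial ((y # m) @ x # m1))
      (Conj (Entry (fst y) (snd y)) (Conj (Entry (fst x) (snd x)) (monomial (m @ m1))))"
    using Cons by (simp add: btc.cong_conj btc.refl)
  also have "btc minv \<dots> (Conj (Entry (fst x) (snd x)) (monomial ((y # m) @ m1)))"
    by (simp add: btc_conj_left_commute)
  finally show ?case .
qed

lemma monomial_sum_append:
  "btc minv (monomial_sum (ms1 @ ms2)) (Alt (monomial_sum ms1) (monomial_sum ms2))"
proof (induction ms1)
  case Nil
  have "btc minv (monomial_sum ms2) (Alt (monomial_sum ms2) Delta)" by (rule btc.sym, rule btc.C4)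
  also have "btc minv \<dots> (Alt Delta (monomial_sum ms2))" by (rule btc.C1)
  finally show ?case by simp
next
  case (Cons m r)
  have "btc minv (monomial_sum ((m # r) @ ms2)) (Alt (monomial m) (Alt (monomial_sum r) (monomial_sum ms2)))"
    using Cons by (simp add: btc.cong_alt btc.refl)
  also have "btc minv \<dots> (Alt (monomial_sum (m # r)) (monomial_sum ms2))"
    by (simp, rule btc.sym, rule btc.C2)
  finally show ?case .
qed

lemma conj_monomial_monomial_sum:
  "btc minv (Conj (monomial m) (monomial_sum ms)) (monomial_sum (map (\<lambda>m2. m @ m2) ms))"
proof (induction ms)
  case Nil
  then show ?case by (simp add: btc.T4)
next
  case (Cons m2 r)
  have "btc minv (Conj (monomial m) (monomial_sum (m2 # r)))
      (Alt (Conj (monomial m) (monomial m2)) (Conj (monomial m) (monomial_sum r)))"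
    by (simp add: btc.C5)
  also have "btc minv \<dots> (Alt (monomial (m @ m2)) (monomial_sum (map (\<lambda>m2. m @ m2) r)))"
    by (rule btc.cong_alt[OF btc.sym[OF monomial_append] Cons])
  finally show ?case by simp
qed

lemma conj_monomial_sums:
  "btc minv (Conj (monomial_sum ms1) (monomial_sum ms2)) (monomial_sum (monomial_products ms1 ms2))"
proof (induction ms1)
  case Nil
  have "btc minv (Conj Delta (monomial_sum ms2)) (Conj (monomial_sum ms2) Delta)" by (rule btc.T1)
  also have "btc minv \<dots> Delta" by (rule btc.T4)
  finally show ?case by (simp add: monomial_products_def)
next
  case (Cons m r)
  let ?Y = "monomial_sum ms2"
  have "btc minv (Conj (monomial_sum (m # r)) ?Y) (Conj ?Y (Alt (monomial m) (monomial_sum r)))"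
    by (simp add: btc.T1)
  also have "btc minv \<dots> (Alt (Conj ?Y (monomial m)) (Conj ?Y (monomial_sum r)))" by (rule btc.C5)
  also have "btc minv \<dots> (Alt (Conj (monomial m) ?Y) (Conj (monomial_sum r) ?Y))"
    by (rule btc.cong_alt; rule btc.T1)
  also have "btc minv \<dots> (Alt (monomial_sum (map (\<lambda>m2. m @ m2) ms2)) (monomial_sum (monomial_products r ms2)))"
    by (rule btc.cong_alt[OF conj_monomial_monomial_sum Cons])
  also have "btc minv \<dots> (monomial_sum (map (\<lambda>m2. m @ m2) ms2 @ monomial_products r ms2))"
    by (rule btc.sym, rule monomial_sum_append)
  finally show ?case by (simp add: monomial_products_def)
qed

lemma monomial_sum_absorb:
  assumes "btc minv x (monomial m)" and "m \<in> set ms"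
  shows "btc minv (Alt (monomial_sum ms) x) (monomial_sum ms)"
  using assms(2)
proof (induction ms)
  case Nil
  then show ?case by simp
next
  case (Cons m' r)
  show ?case
  proof (cases "m' = m")
    case True
    let ?C = "monomial m" and ?R = "monomial_sum r"
    have "btc minv (Alt (monomial_sum (m' # r)) x) (Alt x (Alt ?C ?R))" using True by (simp add: btc.C1)
    also have "btc minv \<dots> (Alt (Alt x ?C) ?R)" by (rule btc.sym, rule btc.C2)
    also have "btc minv \<dots> (Alt (Alt ?C ?C) ?R)" using assms(1) by (intro btc.cong_alt btc.refl)
    also have "btc minv \<dots> (Alt ?C ?R)" by (rule btc.cong_alt[OF btc.C3 btc.refl])
    finally show ?thesis using True by simp
  next
    case False
    then have "m \<in> set r" using Cons.prems by simp
    have "btc minv (Alt (monomial_sum (m' # r)) x) (Alt (monomial m') (Alt (monomial_sum r) x))"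
      by (simp add: btc.C2)
    also have "btc minv \<dots> (Alt (monomial m') (monomial_sum r))"
      by (rule btc.cong_alt[OF btc.refl Cons.IH[OF \<open>m \<in> set r\<close>]])
    finally show ?thesis by simp
  qed
qed

lemma monomial_sum_absorb_sum:
  assumes "\<forall>m\<in>set ms2. \<exists>m'\<in>set ms1. btc minv (monomial m) (monomial m')"
  shows "btc minv (Alt (monomial_sum ms1) (monomial_sum ms2)) (monomial_sum ms1)"
  using assms
proof (induction ms2)
  case Nil
  then show ?case by (simp add: btc.C4)
next
  case (Cons m r)
  then obtain m' where m': "m' \<in> set ms1" "btc minv (monomial m) (monomial m')" by auto
  have "btc minv (Alt (monomial_sum ms1) (monomial_sum (m # r)))
      (Alt (Alt (monomial_sum ms1) (monomial m)) (monomial_sum r))"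
    by (simp, rule btc.sym, rule btc.C2)
  also have "btc minv \<dots> (Alt (monomial_sum ms1) (monomial_sum r))"
    by (rule btc.cong_alt[OF monomial_sum_absorb[OF m'(2) m'(1)] btc.refl])
  also have "btc minv \<dots> (monomial_sum ms1)" using Cons by simp
  finally show ?case .
qed

subsection \<open>Tuplices of monomials\<close>

lemma tup_oplus_f_eps [simp]: "tup_oplus f f_eps = f" "tup_oplus f_eps f = f"
  by (auto simp: tup_oplus_def f_eps_def fun_eq_iff split: option.splits)

lemma tup_oplus_assoc: "tup_oplus (tup_oplus f g) h = tup_oplus f (tup_oplus g h)"
  by (auto simp: tup_oplus_def fun_eq_iff add.assoc split: option.splits)

fun monomial_sem :: "('d::comm_ring_1 \<Rightarrow> 'd) \<Rightarrow> ('a \<times> dterm) list \<Rightarrow> 'a \<Rightarrow> 'd option" where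
  "monomial_sem minv [] = f_eps"
| "monomial_sem minv (x # xs) = tup_oplus (f_entry (fst x) (dsem minv (snd x))) (monomial_sem minv xs)"

lemma monomial_sem_append:
  "monomial_sem minv (m1 @ m2) = tup_oplus (monomial_sem minv m1) (monomial_sem minv m2)"
  by (induction m1) (auto simp: tup_oplus_assoc)

lemma monomial_sem_products:
  "monomial_sem minv ` set (monomial_products ms1 ms2) =
     {tup_oplus f g | f g. f \<in> monomial_sem minv ` set ms1 \<and> g \<in> monomial_sem minv ` set ms2}"
  by (force simp: monomial_products_def monomial_sem_append)

definition attr_total :: "('d::comm_ring_1 \<Rightarrow> 'd) \<Rightarrow> 'a \<Rightarrow> ('a \<times> dterm) list \<Rightarrow> 'd" where
  "attr_total minv b m = sum_list (map (\<lambda>x. dsem minv (snd x)) (filter (\<lambda>x. fst x = b) m))"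

lemma attr_total_simps [simp]:
  "attr_total minv b [] = 0"
  "attr_total minv b (x # xs) =
     (if fst x = b then dsem minv (snd x) + attr_total minv b xs else attr_total minv b xs)"
  "attr_total minv b (m1 @ m2) = attr_total minv b m1 + attr_total minv b m2"
  by (auto simp: attr_total_def)

lemma attr_total_not_in: "b \<notin> fst ` set m \<Longrightarrow> attr_total minv b m = 0"
  by (induction m) auto

lemma attr_total_filter: "b \<noteq> a \<Longrightarrow> attr_total minv b (filter (\<lambda>y. fst y \<noteq> a) m) = attr_total minv b m"
  by (induction m) auto

lemma monomial_sem_apply:
  "monomial_sem minv m b = (if b \<in> fst ` set m then Some (attr_total minv b m) else None)"
  by (induction m) (auto simp: tup_oplus_def f_entry_def f_eps_def attr_total_not_in split: option.splits)

lemma monomial_sem_eq_iff: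
  "monomial_sem minv m1 = monomial_sem minv m2 \<longleftrightarrow>
     fst ` set m1 = fst ` set m2 \<and> (\<forall>b\<in>fst ` set m1. attr_total minv b m1 = attr_total minv b m2)"
  unfolding fun_eq_iff monomial_sem_apply by (auto split: if_splits)

lemma monomial_sem_filter:
  "monomial_sem minv m1 = monomial_sem minv m2 \<Longrightarrow>
   monomial_sem minv (filter (\<lambda>y. fst y \<noteq> a) m1) = monomial_sem minv (filter (\<lambda>y. fst y \<noteq> a) m2)"
  unfolding monomial_sem_eq_iff by (auto simp: attr_total_filter image_iff)

subsection \<open>Equal monomials\<close>

lemma deval_closed: "dclosed p \<Longrightarrow> deval minv \<rho> p = dsem minv p"
  unfolding dsem_def by (induction p) auto

lemma btc_Gam_zero:
  assumes "dclosed p" and "dsem minv p = 0"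
  shows "btc minv (Gam p) Eps"
proof -
  have "btc minv (Gam p) (Gam DZero)" by (rule btc.DE) (simp add: deval_closed assms)
  also have "btc minv \<dots> Eps" by (rule btc.T7)
  finally show ?thesis .
qed

lemma btc_Entry_cong:
  assumes "dclosed p" and "dclosed q" and "dsem minv p = dsem minv q"
  shows "btc minv (Entry a p) (Entry a q)"
proof -
  have zero: "btc minv (Gam (dsub p q)) Eps"
    using assms by (intro btc_Gam_zero) (simp_all add: dsub_def dsem_def)
  have guard: "btc minv (Entry a x) (Conj (Gam (dsub p q)) (Entry a x))" for x
  proof -
    have "btc minv (Entry a x) (Conj (Entry a x) Eps)" by (rule btc.sym, rule btc.T3)
    also have "btc minv \<dots> (Conj Eps (Entry a x))" by (rule btc.T1)
    also have "btc minv \<dots> (Conj (Gam (dsub p q)) (Entry a x))"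
      by (rule btc.cong_conj[OF btc.sym[OF zero] btc.refl])
    finally show ?thesis .
  qed
  have "btc minv (Entry a p) (Conj (Gam (dsub p q)) (Entry a p))" by (rule guard)
  also have "btc minv \<dots> (Conj (Gam (dsub p q)) (Entry a q))" by (rule btc.T10)
  also have "btc minv \<dots> (Entry a q)" by (rule btc.sym, rule guard)
  finally show ?thesis .
qed

fun attr_sum_term :: "dterm \<Rightarrow> 'a \<Rightarrow> ('a \<times> dterm) list \<Rightarrow> dterm" where
  "attr_sum_term q a [] = q"
| "attr_sum_term q a (x # xs) =
     (if fst x = a then attr_sum_term (DAdd q (snd x)) a xs else attr_sum_term q a xs)"

lemma dsem_attr_sum_term: "dsem minv (attr_sum_term q a m) = dsem minv q + attr_total minv a m"
  by (induction m arbitrary: q) (auto simp: dsem_def algebra_simps)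

lemma dclosed_attr_sum_term: "dclosed q \<Longrightarrow> monomial_closed m \<Longrightarrow> dclosed (attr_sum_term q a m)"
  by (induction m arbitrary: q) (auto simp: monomial_closed_def)

lemma monomial_gather:
  "btc minv (Conj (Entry a q) (monomial m))
     (Conj (Entry a (attr_sum_term q a m)) (monomial (filter (\<lambda>y. fst y \<noteq> a) m)))"
proof (induction m arbitrary: q)
  case Nil
  then show ?case by (simp add: btc.refl)
next
  case (Cons x xs)
  let ?rest = "\<lambda>q. Conj (Entry a (attr_sum_term q a xs)) (monomial (filter (\<lambda>y. fst y \<noteq> a) xs))"
  show ?case
  proof (cases "fst x = a")
    case True
    have "btc minv (Conj (Entry a q) (monomial (x # xs)))
        (Conj (Conj (Entry a q) (Entry a (snd x))) (monomial xs))"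
      using btc.sym[OF btc.T2[of minv "Entry a q" "Entry a (snd x)" "monomial xs"]] True by simp
    also have "btc minv \<dots> (Conj (Entry a (DAdd q (snd x))) (monomial xs))"
      by (rule btc.cong_conj[OF btc.T5 btc.refl])
    also have "btc minv \<dots> (?rest (DAdd q (snd x)))" by (rule Cons)
    finally show ?thesis using True by simp
  next
    case False
    have "btc minv (Conj (Entry a q) (monomial (x # xs)))
        (Conj (Entry (fst x) (snd x)) (Conj (Entry a q) (monomial xs)))"
      by (simp add: btc_conj_left_commute)
    also have "btc minv \<dots> (Conj (Entry (fst x) (snd x)) (?rest q))"
      by (rule btc.cong_conj[OF btc.refl Cons])
    also have "btc minv \<dots> (Conj (Entry a (attr_sum_term q a xs))
        (Conj (Entry (fst x) (snd x)) (monomial (filter (\<lambda>y. fst y \<noteq> a) xs))))"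
      by (rule btc_conj_left_commute)
    finally show ?thesis using False by simp
  qed
qed

lemma monomial_split_attr:
  assumes "a \<in> fst ` set m"
  obtains p where "btc minv (monomial m) (Conj (Entry a p) (monomial (filter (\<lambda>y. fst y \<noteq> a) m)))"
    and "monomial_closed m \<Longrightarrow> dclosed p" and "dsem minv p = attr_total minv a m"
proof -
  obtain x where "x \<in> set m" and x: "fst x = a" using assms by auto
  then obtain m0 r where m: "m = m0 @ x # r" by (metis split_list)
  let ?p = "attr_sum_term (snd x) a (m0 @ r)"
  have "btc minv (monomial m) (Conj (Entry a (snd x)) (monomial (m0 @ r)))"
    using monomial_move_to_front[of minv m0 x r] m x by simp
  also have "btc minv \<dots> (Conj (Entry a ?p) (monomial (filter (\<lambda>y. fst y \<noteq> a) m)))"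
    using monomial_gather[of minv a "snd x" "m0 @ r"] m x by simp
  finally show ?thesis
  proof (rule that)
    show "dclosed ?p" if "monomial_closed m"
      using that m by (intro dclosed_attr_sum_term) (auto simp: monomial_closed_def)
    show "dsem minv ?p = attr_total minv a m"
      using m x by (simp add: dsem_attr_sum_term algebra_simps)
  qed
qed

lemma btc_monomial_if_sem_eq:
  "monomial_closed m1 \<Longrightarrow> monomial_closed m2 \<Longrightarrow> monomial_sem minv m1 = monomial_sem minv m2 \<Longrightarrow>
   btc minv (monomial m1) (monomial m2)"
proof (induction "length m1" arbitrary: m1 m2 rule: less_induct)
  case less
  show ?case
  proof (cases m1)
    case Nil
    then have "m2 = []" using less.prems(3) unfolding monomial_sem_eq_iff by simp
    then show ?thesis using Nil by (simp add: btc.refl)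
  next
    case (Cons y r)
    define a where "a = fst y"
    let ?drop_a = "filter (\<lambda>y. fst y \<noteq> a)"
    have a1: "a \<in> fst ` set m1" and a2: "a \<in> fst ` set m2"
      using less.prems(3) Cons unfolding a_def monomial_sem_eq_iff by auto
    obtain p1 where p1: "btc minv (monomial m1) (Conj (Entry a p1) (monomial (?drop_a m1)))"
      "monomial_closed m1 \<Longrightarrow> dclosed p1" "dsem minv p1 = attr_total minv a m1"
      using monomial_split_attr[OF a1, where minv = minv] by blast
    obtain p2 where p2: "btc minv (monomial m2) (Conj (Entry a p2) (monomial (?drop_a m2)))"
      "monomial_closed m2 \<Longrightarrow> dclosed p2" "dsem minv p2 = attr_total minv a m2"
      using monomial_split_attr[OF a2, where minv = minv] by blast
    have "btc minv (Entry a p1) (Entry a p2)"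
    proof (rule btc_Entry_cong)
      show "dclosed p1" using p1(2) less.prems(1) .
      show "dclosed p2" using p2(2) less.prems(2) .
      have "attr_total minv a m1 = attr_total minv a m2"
        using a1 less.prems(3) unfolding monomial_sem_eq_iff by blast
      then show "dsem minv p1 = dsem minv p2" using p1(3) p2(3) by simp
    qed
    moreover have "btc minv (monomial (?drop_a m1)) (monomial (?drop_a m2))"
    proof (rule less.hyps)
      show "length (?drop_a m1) < length m1" using Cons by (simp add: a_def le_imp_less_Suc)
      show "monomial_closed (?drop_a m1)" "monomial_closed (?drop_a m2)"
        using less.prems(1,2) by (auto simp: monomial_closed_def)
      show "monomial_sem minv (?drop_a m1) = monomial_sem minv (?drop_a m2)"
        using monomial_sem_filter[OF less.prems(3)] .
    qed
    ultimately have "btc minv (Conj (Entry a p1) (monomial (?drop_a m1)))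
        (Conj (Entry a p2) (monomial (?drop_a m2)))" by (rule btc.cong_conj)
    with p1(1) have "btc minv (monomial m1) (Conj (Entry a p2) (monomial (?drop_a m2)))"
      by (rule btc_trans)
    then show ?thesis using btc.sym[OF p2(1)] by (rule btc_trans)
  qed
qed

lemma monomial_sum_absorb_sem:
  assumes "\<forall>m\<in>set ms1. monomial_closed m" and "\<forall>m\<in>set ms2. monomial_closed m"
    and "monomial_sem minv ` set ms2 \<subseteq> monomial_sem minv ` set ms1"
  shows "btc minv (Alt (monomial_sum ms1) (monomial_sum ms2)) (monomial_sum ms1)"
proof (rule monomial_sum_absorb_sum, intro ballI)
  fix m assume m: "m \<in> set ms2"
  then obtain m' where "m' \<in> set ms1" and "monomial_sem minv m = monomial_sem minv m'"
    using assms(3) by (metis image_eqI imageE subsetD)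
  with m assms(1,2) show "\<exists>m'\<in>set ms1. btc minv (monomial m) (monomial m')"
    by (blast intro: btc_monomial_if_sem_eq)
qed

subsection \<open>Normal forms\<close>

definition normal_form :: "('d::comm_ring_1 \<Rightarrow> 'd) \<Rightarrow> 'a tterm \<Rightarrow> ('a \<times> dterm) list list \<Rightarrow> bool" where
  "normal_form minv s ms \<longleftrightarrow> (\<forall>m\<in>set ms. monomial_closed m) \<and>
     btc minv s (monomial_sum ms) \<and> tsem minv s = monomial_sem minv ` set ms"

lemma meadow_mult_inverse:
  assumes "nontrivial_cancellation_meadow minv" and "v \<noteq> 0"
  shows "v * minv v = 1"
proof -
  have "v * (v * minv v) = v * 1"
    using assms(1) unfolding nontrivial_cancellation_meadow_def meadow_def by simp
  then show ?thesis
    using assms unfolding nontrivial_cancellation_meadow_def by blast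
qed

lemma btc_Gam_nonzero:
  assumes "nontrivial_cancellation_meadow minv" and "dclosed p" and "dsem minv p \<noteq> 0"
  shows "btc minv (Gam p) Delta"
proof -
  have "btc minv (Gam p) (Gam (ddiv p p))" by (rule btc.T6)
  also have "btc minv \<dots> (Gam DOne)"
    by (rule btc.DE) (simp add: ddiv_def deval_closed assms(2) meadow_mult_inverse[OF assms(1,3)])
  also have "btc minv \<dots> Delta" by (rule btc.T8)
  finally show ?thesis .
qed

lemma normal_form_Eps: "normal_form minv Eps [[]]"
  by (simp add: normal_form_def monomial_closed_def btc.sym[OF btc.C4])

lemma normal_form_Delta: "normal_form minv Delta []"
  by (simp add: normal_form_def btc.refl)

lemma normal_form_Entry:
  assumes "dclosed p"
  shows "normal_form minv (Entry a p) [[(a, p)]]"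
proof -
  have "btc minv (Entry a p) (Conj (Entry a p) Eps)" by (rule btc.sym, rule btc.T3)
  also have "btc minv \<dots> (Alt (Conj (Entry a p) Eps) Delta)" by (rule btc.sym, rule btc.C4)
  finally show ?thesis using assms by (simp add: normal_form_def monomial_closed_def)
qed

lemma normal_form_Gam:
  assumes "nontrivial_cancellation_meadow minv" and "dclosed p"
  shows "normal_form minv (Gam p) (if dsem minv p = 0 then [[]] else [])"
proof (cases "dsem minv p = 0")
  case True
  have "btc minv (Gam p) Eps" using assms(2) True by (rule btc_Gam_zero)
  also have "btc minv \<dots> (monomial_sum [[]])" by (simp, rule btc.sym, rule btc.C4)
  finally show ?thesis using True by (simp add: normal_form_def monomial_closed_def)
next
  case False
  have "btc minv (Gam p) Delta" using assms False by (rule btc_Gam_nonzero)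
  then show ?thesis using False by (simp add: normal_form_def)
qed

lemma normal_form_Conj:
  assumes "normal_form minv s ms1" and "normal_form minv t ms2"
  shows "normal_form minv (Conj s t) (monomial_products ms1 ms2)"
proof -
  have "btc minv (Conj s t) (Conj (monomial_sum ms1) (monomial_sum ms2))"
    using assms by (intro btc.cong_conj) (simp_all add: normal_form_def)
  also have "btc minv \<dots> (monomial_sum (monomial_products ms1 ms2))" by (rule conj_monomial_sums)
  finally have "btc minv (Conj s t) (monomial_sum (monomial_products ms1 ms2))" .
  moreover have "\<forall>m\<in>set (monomial_products ms1 ms2). monomial_closed m"
    using assms by (auto simp: normal_form_def monomial_products_def monomial_closed_def)
  ultimately show ?thesis using assms by (simp add: normal_form_def monomial_sem_products)
qed

lemma normal_form_Alt:
  assumes "normal_form minv s ms1" and "normal_form minv t ms2"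
  shows "normal_form minv (Alt s t) (ms1 @ ms2)"
proof -
  have "btc minv (Alt s t) (Alt (monomial_sum ms1) (monomial_sum ms2))"
    using assms by (intro btc.cong_alt) (simp_all add: normal_form_def)
  also have "btc minv \<dots> (monomial_sum (ms1 @ ms2))" by (rule btc.sym, rule monomial_sum_append)
  finally show ?thesis using assms by (auto simp: normal_form_def image_Un)
qed

lemma normal_form_exists:
  assumes "nontrivial_cancellation_meadow minv"
  shows "tclosed s \<Longrightarrow> \<exists>ms. normal_form minv s ms"
proof (induction s)
  case Eps
  show ?case using normal_form_Eps by blast
next
  case Delta
  show ?case using normal_form_Delta by blast
next
  case (Entry a p)
  then show ?case using normal_form_Entry by (metis tclosed.simps(4))
next
  case (Gam p)
  then show ?case using normal_form_Gam[OF assms] by (metis tclosed.simps(5))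
next
  case (Conj s t)
  then show ?case using normal_form_Conj by (metis tclosed.simps(6))
next
  case (Alt s t)
  then show ?case using normal_form_Alt by (metis tclosed.simps(7))
qed simp

theorem theorem2:
  fixes minv :: "'d::comm_ring_1 \<Rightarrow> 'd" and s t :: "'a tterm"
  assumes "nontrivial_cancellation_meadow minv"
    and "tclosed s" and "tclosed t"
    and "tsem minv s = tsem minv t"
  shows "btc minv s t"
proof -
  obtain ms1 ms2 where nf: "normal_form minv s ms1" "normal_form minv t ms2"
    using normal_form_exists[OF assms(1)] assms(2,3) by blast
  then have closed: "\<forall>m\<in>set ms1. monomial_closed m" "\<forall>m\<in>set ms2. monomial_closed m"
    and sem: "monomial_sem minv ` set ms1 = monomial_sem minv ` set ms2"
    using assms(4) by (auto simp: normal_form_def)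
  have "btc minv s (monomial_sum ms1)" using nf(1) by (simp add: normal_form_def)
  also have "btc minv \<dots> (Alt (monomial_sum ms1) (monomial_sum ms2))"
    using closed sem by (intro btc.sym[OF monomial_sum_absorb_sem]) simp_all
  also have "btc minv \<dots> (Alt (monomial_sum ms2) (monomial_sum ms1))" by (rule btc.C1)
  also have "btc minv \<dots> (monomial_sum ms2)"
    using closed sem by (intro monomial_sum_absorb_sem) simp_all
  also have "btc minv \<dots> t" using nf(2) by (simp add: normal_form_def btc.sym)
  finally show ?thesis .
qed

end
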